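(* Let $Z=(W,A,X,V,E,S)\sim\mathbb{P}$, where only $(W,A,X)$ is observed. Suppose that for all $j\in\{1,\dots,J\}$: (i) $\mathbb{E}[W_j\mid A,X]=\mathbb{E}[V_jE_jS\mid A,X]$; (ii) $V_j$, $E_j$ and $S$ are mutually independent conditionally on $(A,X)$; (iii) $E_j$ is independent of $(A,X)$; and (iv) $S$ is independent of $(A,X)$. Then for every $j$, the parameter $$\Psi^{(1)}_j(\mathbb{P}):=\log\left(\frac{\mathbb{E}[V_j\mid A=1]}{\mathbb{E}[V_j\mid A=0]}\right)$$ is identifiable.
   Context: $W\in\mathbb{R}_{\ge 0}^J$ are observed category levels, $A\in\{0,1\}$ is a binary exposure, $X\in\mathcal{X}\subseteq\mathbb{R}^p$ are covariates, $V\in\mathbb{R}_{\ge0}^J$ are latent true category levels, $E\in\mathbb{R}_{>0}^J$ are latent category-specific observabilities and $S\in\mathbb{R}_{>0}$ is a latent sample-specific scale; data are i.i.d. draws from $\mathbb{P}$. The parameter is assumed well defined (the conditional means are positive and finite). $\log$ is the natural logarithm. A parameter is identifiable (under a set of assumptions) if its value is uniquely determined by the distribution of the observed variables $(W,A,X)$, i.e. any two distributions satisfying the assumptions and inducing the same distribution of $(W,A,X)$ give the same parameter value. *)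

theory Defs
  imports "HOL-Probability.Probability"
begin

definition sigma_AX :: "'a measure \<Rightarrow> ('a \<Rightarrow> real) \<Rightarrow> ('a \<Rightarrow> real^'p) \<Rightarrow> 'a measure" where
  "sigma_AX M A X = vimage_algebra (space M) (\<lambda>\<omega>. (A \<omega>, X \<omega>)) borel"

definition cond_mean :: "'a measure \<Rightarrow> ('a \<Rightarrow> real) \<Rightarrow> ('a \<Rightarrow> real) \<Rightarrow> real \<Rightarrow> real" where
  "cond_mean M Y A a =
     (\<integral>\<omega>. Y \<omega> * indicator {\<omega>\<in>space M. A \<omega> = a} \<omega> \<partial>M) / measure M {\<omega>\<in>space M. A \<omega> = a}"

definition cond_indep3 :: "'a measure \<Rightarrow> 'a measure \<Rightarrow> ('a \<Rightarrow> real) \<Rightarrow> ('a \<Rightarrow> real) \<Rightarrow> ('a \<Rightarrow> real) \<Rightarrow> bool" where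
  "cond_indep3 M F V E S \<longleftrightarrow>
     (\<forall>B1\<in>sets borel. \<forall>B2\<in>sets borel. \<forall>B3\<in>sets borel.
        AE \<omega> in M. real_cond_exp M F
                 (indicator ({x\<in>space M. V x \<in> B1} \<inter> {x\<in>space M. E x \<in> B2} \<inter> {x\<in>space M. S x \<in> B3})) \<omega>
               = real_cond_exp M F (indicator {x\<in>space M. V x \<in> B1}) \<omega>
                 * real_cond_exp M F (indicator {x\<in>space M. E x \<in> B2}) \<omega>
                 * real_cond_exp M F (indicator {x\<in>space M. S x \<in> B3}) \<omega>)"

text \<open>independence of a real random variable Y and the pair (A, X) (the library's indep_var
  requires equal codomain types, so we unfold it to independence of the generated sigma-algebras)\<close>
definition indep_of_AX :: "'a measure \<Rightarrow> ('a \<Rightarrow> real) \<Rightarrow> ('a \<Rightarrow> real) \<Rightarrow> ('a \<Rightarrow> real^'p) \<Rightarrow> bool" where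
  "indep_of_AX M Y A X \<longleftrightarrow>
     prob_space.indep_set M
       {Y -` B \<inter> space M | B. B \<in> sets (borel :: real measure)}
       {(\<lambda>\<omega>. (A \<omega>, X \<omega>)) -` C \<inter> space M | C. C \<in> sets (borel :: (real \<times> (real^'p)) measure)}"

definition model :: "'a measure \<Rightarrow> nat \<Rightarrow> (nat \<Rightarrow> 'a \<Rightarrow> real) \<Rightarrow> ('a \<Rightarrow> real) \<Rightarrow> ('a \<Rightarrow> real^'p)
     \<Rightarrow> (nat \<Rightarrow> 'a \<Rightarrow> real) \<Rightarrow> (nat \<Rightarrow> 'a \<Rightarrow> real) \<Rightarrow> ('a \<Rightarrow> real) \<Rightarrow> bool" where
  "model M J W A X V E S \<longleftrightarrow>
     prob_space M \<and>
     A \<in> borel_measurable M \<and> (\<forall>\<omega>\<in>space M. A \<omega> \<in> {0, 1}) \<and>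
     X \<in> borel_measurable M \<and>
     S \<in> borel_measurable M \<and> (\<forall>\<omega>\<in>space M. S \<omega> > 0) \<and> integrable M S \<and>
     (\<forall>a\<in>{0::real, 1}. measure M {\<omega>\<in>space M. A \<omega> = a} > 0) \<and>
     (\<forall>j\<in>{1..J}.
        W j \<in> borel_measurable M \<and> V j \<in> borel_measurable M \<and> E j \<in> borel_measurable M \<and>
        (\<forall>\<omega>\<in>space M. W j \<omega> \<ge> 0 \<and> V j \<omega> \<ge> 0 \<and> E j \<omega> > 0) \<and>
        integrable M (W j) \<and> integrable M (V j) \<and> integrable M (E j) \<and>
        integrable M (\<lambda>\<omega>. V j \<omega> * E j \<omega> * S \<omega>) \<and>
        (\<forall>a\<in>{0::real, 1}. cond_mean M (V j) A a > 0) \<and>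
        \<comment> \<open>(i)\<close>
        (AE \<omega> in M. real_cond_exp M (sigma_AX M A X) (W j) \<omega>
                    = real_cond_exp M (sigma_AX M A X) (\<lambda>\<omega>. V j \<omega> * E j \<omega> * S \<omega>) \<omega>) \<and>
        \<comment> \<open>(ii)\<close>
        cond_indep3 M (sigma_AX M A X) (V j) (E j) S \<and>
        \<comment> \<open>(iii)\<close>
        indep_of_AX M (E j) A X \<and>
        \<comment> \<open>(iv)\<close>
        indep_of_AX M S A X)"

definition observed_law :: "'a measure \<Rightarrow> nat \<Rightarrow> (nat \<Rightarrow> 'a \<Rightarrow> real) \<Rightarrow> ('a \<Rightarrow> real) \<Rightarrow> ('a \<Rightarrow> real^'p)
     \<Rightarrow> ((nat \<Rightarrow> real) \<times> real \<times> (real^'p)) measure" where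
  "observed_law M J W A X =
     distr M (PiM {1..J} (\<lambda>_. borel) \<Otimes>\<^sub>M borel \<Otimes>\<^sub>M borel)
       (\<lambda>\<omega>. (restrict (\<lambda>j. W j \<omega>) {1..J}, A \<omega>, X \<omega>))"

definition Psi1 :: "'a measure \<Rightarrow> (nat \<Rightarrow> 'a \<Rightarrow> real) \<Rightarrow> ('a \<Rightarrow> real) \<Rightarrow> nat \<Rightarrow> real" where
  "Psi1 M V A j = ln (cond_mean M (V j) A 1 / cond_mean M (V j) A 0)"

end

theory Submission
  imports Defs
begin

(* The level sets {A = a} belong to the sigma-algebra of (A, X).  By (i) and the defining property
   of conditional expectation, E[W_j 1{A=a}] = E[V_j E_j S 1{A=a}].  Conditional independence (ii)
   together with the independence of E_j and S from (A, X) in (iii), (iv) makes V_j 1{A=a}, E_j and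
   S independent, so E[W_j | A = a] = E[E_j] E[S] E[V_j | A = a].  The positive factor E[E_j] E[S]
   cancels in the ratio, and E[W_j | A = a] is a functional of the law of (W, A, X). *)

locale prob_space_subalgebra = finite_measure_subalgebra M F + prob_space M for M F

lemma (in prob_space) set_integral_indicator_eq_prob:
  assumes "T \<in> events" "G \<in> events"
  shows "(\<integral>x\<in>G. indicator T x \<partial>M) = prob (T \<inter> G)"
  using assms by (simp add: set_lebesgue_integral_def indicator_inter_arith[symmetric] Int_commute)

lemma (in prob_space) expectation_pos:
  fixes f :: "'a \<Rightarrow> real"
  assumes "integrable M f" "\<And>x. x \<in> space M \<Longrightarrow> f x > 0"
  shows "expectation f > 0"
proof -
  have nonneg: "AE x in M. 0 \<le> f x" using assms(2) by (auto intro!: AE_I2 less_imp_le)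
  have "expectation f \<noteq> 0"
  proof
    assume "expectation f = 0"
    then have "AE x in M. f x = 0" using integral_nonneg_eq_0_iff_AE[OF assms(1) nonneg] by simp
    moreover have "AE x in M. f x > 0" using assms(2) by (rule AE_I2)
    ultimately have "AE x in M. False" by eventually_elim auto
    then show False by simp
  qed
  moreover have "expectation f \<ge> 0" using nonneg by (rule integral_nonneg_AE)
  ultimately show ?thesis by linarith
qed

lemma (in sigma_finite_subalgebra) set_integral_eq_of_real_cond_exp_AE_eq:
  assumes "integrable M f" "integrable M g"
    and "AE x in M. real_cond_exp M F f x = real_cond_exp M F g x"
    and "G \<in> sets F"
  shows "(\<integral>x\<in>G. f x \<partial>M) = (\<integral>x\<in>G. g x \<partial>M)"
proof -
  have G: "G \<in> sets M" using assms(4) subalg by (auto simp: subalgebra_def)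
  have "(\<integral>x\<in>G. f x \<partial>M) = (\<integral>x\<in>G. real_cond_exp M F f x \<partial>M)"
    using assms(1,4) by (rule real_cond_exp_intA)
  also have "\<dots> = (\<integral>x\<in>G. real_cond_exp M F g x \<partial>M)"
    using assms(3) G by (intro set_lebesgue_integral_cong_AE) auto
  also have "\<dots> = (\<integral>x\<in>G. g x \<partial>M)"
    using assms(2,4) by (rule real_cond_exp_intA[symmetric])
  finally show ?thesis .
qed

lemma (in prob_space_subalgebra) real_cond_exp_indicator_indep:
  assumes indep: "indep_set \<T> (sets F)" and "T \<in> \<T>"
  shows "AE x in M. real_cond_exp M F (indicator T) x = prob T"
proof (rule real_cond_exp_charact)
  have T: "T \<in> events" using indep_setD_ev1[OF indep] \<open>T \<in> \<T>\<close> by blast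
  then show "integrable M (indicator T :: 'a \<Rightarrow> real)"
    by (intro integrable_real_indicator) (simp_all add: emeasure_eq_measure)
  fix G assume G: "G \<in> sets F"
  then have "G \<in> events" using subalg by (auto simp: subalgebra_def)
  with T have "(\<integral>x\<in>G. indicator T x \<partial>M) = prob (T \<inter> G)"
    by (rule set_integral_indicator_eq_prob)
  also have "\<dots> = (\<integral>x\<in>G. prob T \<partial>M)"
    using indep_setD[OF indep \<open>T \<in> \<T>\<close> G] \<open>G \<in> events\<close> by (simp add: set_integral_const)
  finally show "(\<integral>x\<in>G. indicator T x \<partial>M) = (\<integral>x\<in>G. prob T \<partial>M)" .
qed simp_all

lemma (in prob_space_subalgebra) prob_rectangle_cond_indep3:
  fixes V E S :: "'a \<Rightarrow> real"
  assumes [measurable]: "V \<in> borel_measurable M" "E \<in> borel_measurable M" "S \<in> borel_measurable M"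
    and ci: "cond_indep3 M F V E S"
    and indep_E: "indep_set {E -` B \<inter> space M | B. B \<in> sets borel} (sets F)"
    and indep_S: "indep_set {S -` B \<inter> space M | B. B \<in> sets borel} (sets F)"
    and G: "G \<in> sets F"
    and B [measurable]: "B1 \<in> sets borel" "B2 \<in> sets borel" "B3 \<in> sets borel"
  shows "prob ({x\<in>space M. V x \<in> B1} \<inter> {x\<in>space M. E x \<in> B2} \<inter> {x\<in>space M. S x \<in> B3} \<inter> G)
       = prob ({x\<in>space M. V x \<in> B1} \<inter> G) * prob {x\<in>space M. E x \<in> B2} * prob {x\<in>space M. S x \<in> B3}"
proof -
  let ?V = "{x\<in>space M. V x \<in> B1}" and ?E = "{x\<in>space M. E x \<in> B2}" and ?S = "{x\<in>space M. S x \<in> B3}"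
  let ?c = "real_cond_exp M F"
  have G_ev: "G \<in> events" using G subalg by (auto simp: subalgebra_def)
  have [measurable]: "?V \<in> events" "?E \<in> events" "?S \<in> events" by measurable
  have "?E \<in> {E -` B \<inter> space M | B. B \<in> sets borel}" "?S \<in> {S -` B \<inter> space M | B. B \<in> sets borel}"
    using B by blast+
  then have ae_E: "AE x in M. ?c (indicator ?E) x = prob ?E" and ae_S: "AE x in M. ?c (indicator ?S) x = prob ?S"
    by (auto intro: real_cond_exp_indicator_indep[OF indep_E] real_cond_exp_indicator_indep[OF indep_S])
  have ae_VES: "AE x in M. ?c (indicator (?V \<inter> ?E \<inter> ?S)) x = ?c (indicator ?V) x * ?c (indicator ?E) x * ?c (indicator ?S) x"
    using ci B unfolding cond_indep3_def by blast
  have int_ind: "integrable M (indicator T :: 'a \<Rightarrow> real)" if "T \<in> events" for T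
    using that by (intro integrable_real_indicator) (simp_all add: emeasure_eq_measure)
  have "prob (?V \<inter> ?E \<inter> ?S \<inter> G) = (\<integral>x\<in>G. indicator (?V \<inter> ?E \<inter> ?S) x \<partial>M)"
    using G_ev by (simp add: set_integral_indicator_eq_prob)
  also have "\<dots> = (\<integral>x\<in>G. ?c (indicator (?V \<inter> ?E \<inter> ?S)) x \<partial>M)"
    using G by (intro real_cond_exp_intA int_ind) simp
  also have "\<dots> = (\<integral>x\<in>G. ?c (indicator ?V) x * (prob ?E * prob ?S) \<partial>M)"
    using ae_VES ae_E ae_S G_ev by (intro set_lebesgue_integral_cong_AE) auto
  also have "\<dots> = (\<integral>x\<in>G. ?c (indicator ?V) x \<partial>M) * (prob ?E * prob ?S)"
    by (simp add: set_lebesgue_integral_def)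
  also have "(\<integral>x\<in>G. ?c (indicator ?V) x \<partial>M) = prob (?V \<inter> G)"
    using G G_ev by (simp add: real_cond_exp_intA[symmetric] int_ind set_integral_indicator_eq_prob)
  finally show ?thesis by (simp add: mult_ac)
qed

lemma (in prob_space_subalgebra) prob_rectangle_mult_indicator_cond_indep3:
  fixes V E S :: "'a \<Rightarrow> real"
  assumes [measurable]: "V \<in> borel_measurable M" "E \<in> borel_measurable M" "S \<in> borel_measurable M"
    and ci: "cond_indep3 M F V E S"
    and indep_E: "indep_set {E -` B \<inter> space M | B. B \<in> sets borel} (sets F)"
    and indep_S: "indep_set {S -` B \<inter> space M | B. B \<in> sets borel} (sets F)"
    and G: "G \<in> sets F"
    and B [measurable]: "B1 \<in> sets borel" "B2 \<in> sets borel" "B3 \<in> sets borel"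
  shows "prob ({x\<in>space M. V x * indicator G x \<in> B1} \<inter> {x\<in>space M. E x \<in> B2} \<inter> {x\<in>space M. S x \<in> B3})
       = prob {x\<in>space M. V x * indicator G x \<in> B1} * prob {x\<in>space M. E x \<in> B2} * prob {x\<in>space M. S x \<in> B3}"
proof -
  let ?V = "{x\<in>space M. V x \<in> B1}" and ?E = "{x\<in>space M. E x \<in> B2}" and ?S = "{x\<in>space M. S x \<in> B3}"
  let ?Y = "{x\<in>space M. V x * indicator G x \<in> B1}"
  note rect = prob_rectangle_cond_indep3[OF assms(1-6)]
  have G_ev [measurable]: "G \<in> events" using G subalg by (auto simp: subalgebra_def)
  have [measurable]: "?V \<in> events" "?E \<in> events" "?S \<in> events" by measurable
  show ?thesis
  proof (cases "0 \<in> B1")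
    case False
    then have "?Y = ?V \<inter> G" using sets.sets_into_space[OF G_ev] by (auto simp: indicator_def)
    then show ?thesis using rect[OF G B] by (simp add: Int_ac)
  next
    case True
    \<comment> \<open>off G the variable is 0, so the level set splits into rectangles over G and over space M - G\<close>
    have coG: "space M - G \<in> sets F" using G subalg by (metis sets.compl_sets subalgebra_def)
    have Y: "?Y = (?V \<inter> G) \<union> (space M - G)" using True by (auto simp: indicator_def)
    have "prob (?Y \<inter> ?E \<inter> ?S) = prob (?V \<inter> ?E \<inter> ?S \<inter> G) + prob (space M \<inter> ?E \<inter> ?S \<inter> (space M - G))"
      unfolding Y by (subst finite_measure_Union[symmetric]) (auto intro!: arg_cong[where f=prob])
    also have "\<dots> = (prob (?V \<inter> G) + prob (space M - G)) * prob ?E * prob ?S"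
      using rect[OF G B] rect[OF coG _ B(2,3), of UNIV] by (simp add: Int_absorb2 algebra_simps)
    also have "prob (?V \<inter> G) + prob (space M - G) = prob ?Y"
      unfolding Y by (subst finite_measure_Union) auto
    finally show ?thesis .
  qed
qed

lemma (in prob_space) integral_mult3_eq_of_prob_rectangles:
  fixes X Y Z :: "'a \<Rightarrow> real"
  assumes [measurable]: "X \<in> borel_measurable M" "Y \<in> borel_measurable M" "Z \<in> borel_measurable M"
    and "integrable M X" "integrable M Y" "integrable M Z"
    and rect: "\<And>B1 B2 B3. B1 \<in> sets borel \<Longrightarrow> B2 \<in> sets borel \<Longrightarrow> B3 \<in> sets borel \<Longrightarrow>
      prob ({x\<in>space M. X x \<in> B1} \<inter> {x\<in>space M. Y x \<in> B2} \<inter> {x\<in>space M. Z x \<in> B3})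
      = prob {x\<in>space M. X x \<in> B1} * prob {x\<in>space M. Y x \<in> B2} * prob {x\<in>space M. Z x \<in> B3}"
  shows "(\<integral>x. X x * Y x * Z x \<partial>M) = expectation X * expectation Y * expectation Z"
proof -
  define R where "R i = [X, Y, Z] ! i" for i
  let ?I = "{0, 1, 2 :: nat}"
  let ?F = "\<lambda>i. {R i -` B \<inter> space M | B. B \<in> sets borel}"
  have R_measurable: "R i \<in> borel_measurable M" if "i \<in> ?I" for i
    using that by (auto simp: R_def)
  have "indep_sets ?F ?I"
  proof (subst indep_sets_finite)
    show "?F i \<subseteq> events" if "i \<in> ?I" for i
      using measurable_sets[OF R_measurable[OF that]] by blast
    show "space M \<in> ?F i" for i
      by (auto intro!: exI[of _ UNIV])
    show "\<forall>T\<in>Pi ?I ?F. prob (\<Inter>i\<in>?I. T i) = (\<Prod>i\<in>?I. prob (T i))"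
    proof
      fix T assume "T \<in> Pi ?I ?F"
      then obtain B1 B2 B3 where "B1 \<in> sets borel" "B2 \<in> sets borel" "B3 \<in> sets borel"
        and "T 0 = {x\<in>space M. X x \<in> B1}" "T 1 = {x\<in>space M. Y x \<in> B2}" "T 2 = {x\<in>space M. Z x \<in> B3}"
        by (force simp: R_def vimage_def Int_def)
      then show "prob (\<Inter>i\<in>?I. T i) = (\<Prod>i\<in>?I. prob (T i))"
        using rect by (simp add: Int_ac mult_ac)
    qed
  qed auto
  then have indep: "indep_vars (\<lambda>_. borel) R ?I"
    using R_measurable by (simp add: indep_vars_def2)
  have "integrable M (R i)" if "i \<in> ?I" for i
    using that assms(4-6) by (auto simp: R_def)
  then have "(\<integral>x. (\<Prod>i\<in>?I. R i x) \<partial>M) = (\<Prod>i\<in>?I. expectation (R i))"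
    by (intro indep_vars_lebesgue_integral[OF _ indep]) simp_all
  then show ?thesis by (simp add: R_def mult_ac)
qed

lemma (in prob_space_subalgebra) set_integral_mult3_cond_indep3:
  fixes V E S :: "'a \<Rightarrow> real"
  assumes [measurable]: "V \<in> borel_measurable M" "E \<in> borel_measurable M" "S \<in> borel_measurable M"
    and "cond_indep3 M F V E S"
    and "indep_set {E -` B \<inter> space M | B. B \<in> sets borel} (sets F)"
    and "indep_set {S -` B \<inter> space M | B. B \<in> sets borel} (sets F)"
    and G: "G \<in> sets F"
    and "integrable M V" "integrable M E" "integrable M S"
  shows "(\<integral>x\<in>G. V x * E x * S x \<partial>M) = (\<integral>x\<in>G. V x \<partial>M) * expectation E * expectation S"
proof -
  have [measurable]: "G \<in> events" using G subalg by (auto simp: subalgebra_def)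
  have "(\<integral>x\<in>G. V x * E x * S x \<partial>M) = (\<integral>x. (V x * indicator G x) * E x * S x \<partial>M)"
    by (simp add: set_lebesgue_integral_def mult_ac)
  also have "\<dots> = expectation (\<lambda>x. V x * indicator G x) * expectation E * expectation S"
    using assms(8-10) prob_rectangle_mult_indicator_cond_indep3[OF assms(1-7)]
    by (intro integral_mult3_eq_of_prob_rectangles integrable_real_mult_indicator) auto
  also have "expectation (\<lambda>x. V x * indicator G x) = (\<integral>x\<in>G. V x \<partial>M)"
    by (simp add: set_lebesgue_integral_def mult.commute)
  finally show ?thesis .
qed

lemma sets_sigma_AX:
  fixes A :: "'a \<Rightarrow> real" and X :: "'a \<Rightarrow> real^'p"
  shows "sets (sigma_AX M A X) = {(\<lambda>\<omega>. (A \<omega>, X \<omega>)) -` C \<inter> space M | C. C \<in> sets (borel :: (real \<times> (real^'p)) measure)}"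
  unfolding sigma_AX_def by (rule sets_vimage_algebra2) auto

lemma space_sigma_AX [simp]: "space (sigma_AX M A X) = space M"
  by (simp add: sigma_AX_def)

lemma prob_space_subalgebra_sigma_AX:
  fixes A :: "'a \<Rightarrow> real" and X :: "'a \<Rightarrow> real^'p"
  assumes "prob_space M" and [measurable]: "A \<in> borel_measurable M" "X \<in> borel_measurable M"
  shows "prob_space_subalgebra M (sigma_AX M A X)"
proof -
  have "(\<lambda>\<omega>. (A \<omega>, X \<omega>)) \<in> borel_measurable M" by measurable
  then have "subalgebra M (sigma_AX M A X)"
    by (auto simp: subalgebra_def sets_sigma_AX dest: measurable_sets)
  with assms(1) show ?thesis
    by (simp add: prob_space_subalgebra_def finite_measure_subalgebra_def finite_measure_subalgebra_axioms_def
        prob_space_def)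
qed

lemma indep_of_AX_iff_indep_set:
  fixes A :: "'a \<Rightarrow> real" and X :: "'a \<Rightarrow> real^'p"
  shows "indep_of_AX M Y A X \<longleftrightarrow>
    prob_space.indep_set M {Y -` B \<inter> space M | B. B \<in> sets borel} (sets (sigma_AX M A X))"
  by (simp add: indep_of_AX_def sets_sigma_AX)

lemma level_set_in_sigma_AX:
  fixes A :: "'a \<Rightarrow> real" and X :: "'a \<Rightarrow> real^'p"
  shows "{\<omega>\<in>space M. A \<omega> = a} \<in> sets (sigma_AX M A X)"
proof -
  have "{a} \<times> UNIV \<in> sets (borel :: (real \<times> (real^'p)) measure)"
    by (intro borel_closed closed_Times) auto
  moreover have "{\<omega>\<in>space M. A \<omega> = a} = (\<lambda>\<omega>. (A \<omega>, X \<omega>)) -` ({a} \<times> UNIV) \<inter> space M" by auto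
  ultimately show ?thesis unfolding sets_sigma_AX by blast
qed

lemma cond_mean_eq_set_integral:
  "cond_mean M Y A a = (\<integral>\<omega>\<in>{\<omega>\<in>space M. A \<omega> = a}. Y \<omega> \<partial>M) / measure M {\<omega>\<in>space M. A \<omega> = a}"
  by (simp add: cond_mean_def set_lebesgue_integral_def mult.commute)

lemma cond_mean_cong:
  assumes "\<And>\<omega>. \<omega> \<in> space M \<Longrightarrow> Y \<omega> = Y' \<omega>" "\<And>\<omega>. \<omega> \<in> space M \<Longrightarrow> A \<omega> = A' \<omega>"
  shows "cond_mean M Y A a = cond_mean M Y' A' a"
proof -
  have "{\<omega>\<in>space M. A \<omega> = a} = {\<omega>\<in>space M. A' \<omega> = a}" using assms(2) by auto
  then show ?thesis
    unfolding cond_mean_def using assms(1) by (simp cong: Bochner_Integration.integral_cong)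
qed

lemma cond_mean_distr:
  assumes \<phi> [measurable]: "\<phi> \<in> measurable M N"
    and [measurable]: "Y \<in> borel_measurable N" "A \<in> borel_measurable N"
  shows "cond_mean (distr M N \<phi>) Y A a = cond_mean M (\<lambda>\<omega>. Y (\<phi> \<omega>)) (\<lambda>\<omega>. A (\<phi> \<omega>)) a"
proof -
  have level_sets: "{z\<in>space N. A z = a} \<in> sets N" by measurable
  have level: "\<phi> -` {z\<in>space N. A z = a} \<inter> space M = {\<omega>\<in>space M. A (\<phi> \<omega>) = a}"
    using measurable_space[OF \<phi>] by auto
  have "(\<integral>z. Y z * indicator {z\<in>space N. A z = a} z \<partial>distr M N \<phi>)
      = (\<integral>\<omega>. Y (\<phi> \<omega>) * indicator {\<omega>\<in>space M. A (\<phi> \<omega>) = a} \<omega> \<partial>M)"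
    using measurable_space[OF \<phi>] by (subst integral_distr) (auto simp: indicator_def intro!: Bochner_Integration.integral_cong)
  moreover have "measure (distr M N \<phi>) {z\<in>space N. A z = a} = measure M {\<omega>\<in>space M. A (\<phi> \<omega>) = a}"
    unfolding measure_distr[OF \<phi> level_sets] level ..
  ultimately show ?thesis by (simp add: cond_mean_def)
qed

lemma cond_mean_W_eq_scaled_cond_mean_V:
  assumes "model M J W A X V E S" and "j \<in> {1..J}"
  shows "cond_mean M (W j) A a = (\<integral>x. E j x \<partial>M) * (\<integral>x. S x \<partial>M) * cond_mean M (V j) A a"
proof -
  note m = assms(1)[unfolded model_def]
  interpret prob_space_subalgebra M "sigma_AX M A X"
    using m by (intro prob_space_subalgebra_sigma_AX) auto
  have G: "{\<omega>\<in>space M. A \<omega> = a} \<in> sets (sigma_AX M A X)" by (rule level_set_in_sigma_AX)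
  have "(\<integral>\<omega>\<in>{\<omega>\<in>space M. A \<omega> = a}. W j \<omega> \<partial>M) = (\<integral>\<omega>\<in>{\<omega>\<in>space M. A \<omega> = a}. V j \<omega> * E j \<omega> * S \<omega> \<partial>M)"
    using m assms(2) G by (intro set_integral_eq_of_real_cond_exp_AE_eq) auto
  also have "\<dots> = (\<integral>\<omega>\<in>{\<omega>\<in>space M. A \<omega> = a}. V j \<omega> \<partial>M) * expectation (E j) * expectation S"
    using m assms(2) G by (intro set_integral_mult3_cond_indep3) (auto simp: indep_of_AX_iff_indep_set)
  finally show ?thesis by (simp add: cond_mean_eq_set_integral mult_ac)
qed

lemma Psi1_eq_ln_ratio_cond_mean_W:
  assumes "model M J W A X V E S" and "j \<in> {1..J}"
  shows "Psi1 M V A j = ln (cond_mean M (W j) A 1 / cond_mean M (W j) A 0)"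
proof -
  note m = assms(1)[unfolded model_def]
  interpret prob_space M using m by blast
  have "expectation (E j) > 0" "expectation S > 0"
    using m assms(2) by (auto intro!: expectation_pos)
  then show ?thesis
    by (simp add: Psi1_def cond_mean_W_eq_scaled_cond_mean_V[OF assms])
qed

lemma cond_mean_W_eq_cond_mean_observed_law:
  assumes "model M J W A X V E S" and j: "j \<in> {1..J}"
  shows "cond_mean M (W j) A a = cond_mean (observed_law M J W A X) (\<lambda>z. fst z j) (\<lambda>z. fst (snd z)) a"
proof -
  note m = assms(1)[unfolded model_def]
  have [measurable]: "A \<in> borel_measurable M" "X \<in> borel_measurable M" using m by auto
  have [measurable]: "W i \<in> borel_measurable M" if "i \<in> {1..J}" for i using m that by auto
  have "(\<lambda>\<omega>. (restrict (\<lambda>j. W j \<omega>) {1..J}, A \<omega>, X \<omega>))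
      \<in> measurable M (PiM {1..J} (\<lambda>_. borel) \<Otimes>\<^sub>M borel \<Otimes>\<^sub>M borel)"
    by measurable
  then show ?thesis
    unfolding observed_law_def using j
    by (subst cond_mean_distr) (auto intro: cond_mean_cong)
qed

theorem mainTheorem1:
  fixes M1 :: "'a measure" and W1 V1 E1 :: "nat \<Rightarrow> 'a \<Rightarrow> real"
    and A1 S1 :: "'a \<Rightarrow> real" and X1 :: "'a \<Rightarrow> real^'p"
    and M2 :: "'b measure" and W2 V2 E2 :: "nat \<Rightarrow> 'b \<Rightarrow> real"
    and A2 S2 :: "'b \<Rightarrow> real" and X2 :: "'b \<Rightarrow> real^'p"
    and J :: nat
  assumes "model M1 J W1 A1 X1 V1 E1 S1"
    and "model M2 J W2 A2 X2 V2 E2 S2"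
    and "observed_law M1 J W1 A1 X1 = observed_law M2 J W2 A2 X2"
  shows "\<forall>j\<in>{1..J}. Psi1 M1 V1 A1 j = Psi1 M2 V2 A2 j"
proof
  fix j assume j: "j \<in> {1..J}"
  have "cond_mean M1 (W1 j) A1 a = cond_mean M2 (W2 j) A2 a" for a
    unfolding cond_mean_W_eq_cond_mean_observed_law[OF assms(1) j]
      cond_mean_W_eq_cond_mean_observed_law[OF assms(2) j] assms(3) ..
  then show "Psi1 M1 V1 A1 j = Psi1 M2 V2 A2 j"
    unfolding Psi1_eq_ln_ratio_cond_mean_W[OF assms(1) j] Psi1_eq_ln_ratio_cond_mean_W[OF assms(2) j]
    by simp
qed

end
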